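(* Let $N\geq 1$ and let $K$ be an $N\times N$ real matrix with non-negative entries which is diagonally symmetrizable, i.e. $K=D\cdot S$ for some diagonal matrix $D$ with positive diagonal entries and some symmetric real matrix $S$. Let $R_0=\rho(K)$ be the spectral radius of $K$ and define $R_e:[0,1]^N\to\mathbb{R}_+$ by $R_e(\eta)=\rho\big(K\cdot \mathrm{Diag}(\eta)\big)$, where $\mathrm{Diag}(\eta)$ is the diagonal matrix with diagonal entries $\eta_1,\dots,\eta_N$. (i) If every eigenvalue of $K$ is a non-negative real number, then $R_e$ is convex on $[0,1]^N$. (ii) If $R_0$ is a simple eigenvalue of $K$ and every eigenvalue of $K$ belongs to $(-\infty,0]\cup\{R_0\}$, then $R_e$ is concave on $[0,1]^N$.
   Context: $\rho(A)$ denotes the spectral radius of a square matrix $A$ (maximum modulus of its eigenvalues). An eigenvalue is simple if its algebraic multiplicity is $1$. *)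

theory Defs
  imports "HOL-Analysis.Analysis" "Jordan_Normal_Form.Spectral_Radius"
begin

definition cmat :: "real mat \<Rightarrow> complex mat" where
  "cmat A = map_mat complex_of_real A"

definition diag_symmetrizable :: "nat \<Rightarrow> real mat \<Rightarrow> bool" where
  "diag_symmetrizable N K \<longleftrightarrow> (\<exists>D S. D \<in> carrier_mat N N \<and> S \<in> carrier_mat N N \<and>
      diagonal_mat D \<and> (\<forall>i<N. D $$ (i,i) > 0) \<and> transpose_mat S = S \<and> K = D * S)"

definition Re_fun :: "nat \<Rightarrow> real mat \<Rightarrow> (nat \<Rightarrow> real) \<Rightarrow> real" where
  "Re_fun N K \<eta> = spectral_radius (cmat (K * mat_diag N \<eta>))"

text \<open>The cube [0,1]^N; a point eta is given by its coordinates eta 0, ..., eta (N-1)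
  (other values are irrelevant since mat_diag N eta only reads those).\<close>
definition unit_cube :: "nat \<Rightarrow> (nat \<Rightarrow> real) set" where
  "unit_cube N = {\<eta>. \<forall>i<N. 0 \<le> \<eta> i \<and> \<eta> i \<le> 1}"

text \<open>Convexity / concavity on a set of coordinate vectors, written out literally
  (nat => real carries no real_vector instance, so the library convex_on is unfolded).\<close>
definition convex_on_coord :: "(nat \<Rightarrow> real) set \<Rightarrow> ((nat \<Rightarrow> real) \<Rightarrow> real) \<Rightarrow> bool" where
  "convex_on_coord A f \<longleftrightarrow> (\<forall>x\<in>A. \<forall>y\<in>A. \<forall>t::real. 0 \<le> t \<and> t \<le> 1 \<longrightarrow>
      f (\<lambda>i. (1 - t) * x i + t * y i) \<le> (1 - t) * f x + t * f y)"

definition concave_on_coord :: "(nat \<Rightarrow> real) set \<Rightarrow> ((nat \<Rightarrow> real) \<Rightarrow> real) \<Rightarrow> bool" where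
  "concave_on_coord A f \<longleftrightarrow> convex_on_coord A (\<lambda>x. - f x)"

end

theory Submission
  imports Defs "Jordan_Normal_Form.Jordan_Normal_Form_Uniqueness"
begin

(* Write K = D S with D = diag d, and let A = D^(1/2) S D^(1/2): a symmetric matrix with
  non-negative entries and K = D^(1/2) A D^(-1/2). Then K Diag(eta) has the same non-zero
  eigenvalues as H_eta = Diag(sqrt eta) A Diag(sqrt eta), so R_e(eta) is the largest
  eigenvalue of H_eta, i.e. the maximum of x^T H_eta x = (sqrt eta x)^T A (sqrt eta x) over
  unit vectors x.

  Fix c with R_e(c) > 0, a unit top eigenvector z of H_c and u = A (sqrt c z) / R_e(c), so
  that sum_i c_i u_i^2 = 1 and p = c u satisfies A p = R_e(c) u. The linear function
  l(eta) = R_e(c) sum_i eta_i u_i^2 agrees with R_e at c. Under (i), A is positive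
  semidefinite, and the Cauchy-Schwarz inequality for A applied to p and eta u gives
  l <= R_e; so R_e has a supporting hyperplane from below at every point and is convex.
  Under (ii), the simplicity of R_0 forces A to be negative semidefinite on the orthogonal
  complement of its top eigenvector, which yields the reverse Cauchy-Schwarz inequality
  (w^T A w)(p^T A p) <= (w^T A p)^2; applied to w = sqrt eta times the top eigenvector of
  H_eta it gives R_e <= l, hence concavity. Points with R_e(c) = 0 are handled by the
  monotonicity and homogeneity of R_e. *)

hide_const (open) Coset.order

section \<open>Quadratic forms on coordinate vectors\<close>

definition sprod :: "nat \<Rightarrow> (nat \<Rightarrow> real) \<Rightarrow> (nat \<Rightarrow> real) \<Rightarrow> real" where
  "sprod n x y = (\<Sum>i<n. x i * y i)"

definition mvmult :: "nat \<Rightarrow> (nat \<Rightarrow> nat \<Rightarrow> real) \<Rightarrow> (nat \<Rightarrow> real) \<Rightarrow> nat \<Rightarrow> real" where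
  "mvmult n H x = (\<lambda>i. \<Sum>j<n. H i j * x j)"

definition qform :: "nat \<Rightarrow> (nat \<Rightarrow> nat \<Rightarrow> real) \<Rightarrow> (nat \<Rightarrow> real) \<Rightarrow> real" where
  "qform n H x = sprod n x (mvmult n H x)"

definition symmetric_form :: "nat \<Rightarrow> (nat \<Rightarrow> nat \<Rightarrow> real) \<Rightarrow> bool" where
  "symmetric_form n H \<longleftrightarrow> (\<forall>i<n. \<forall>j<n. H i j = H j i)"

definition pos_semidef_form :: "nat \<Rightarrow> (nat \<Rightarrow> nat \<Rightarrow> real) \<Rightarrow> bool" where
  "pos_semidef_form n H \<longleftrightarrow> (\<forall>x. 0 \<le> qform n H x)"

definition nonpos_on_hyperplane :: "nat \<Rightarrow> (nat \<Rightarrow> nat \<Rightarrow> real) \<Rightarrow> bool" where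
  "nonpos_on_hyperplane n H \<longleftrightarrow> (\<exists>z. \<forall>w. sprod n w z = 0 \<longrightarrow> qform n H w \<le> 0)"

lemma sprod_commute: "sprod n x y = sprod n y x"
  unfolding sprod_def by (simp add: mult.commute)

lemma sprod_lincomb_right:
  "sprod n x (\<lambda>i. a * y i + b * z i) = a * sprod n x y + b * sprod n x z"
  unfolding sprod_def by (simp add: sum.distrib sum_distrib_left algebra_simps)

lemma sprod_lincomb_left:
  "sprod n (\<lambda>i. a * y i + b * z i) x = a * sprod n y x + b * sprod n z x"
  using sprod_lincomb_right sprod_commute by metis

lemma sprod_self_lincomb:
  "sprod n (\<lambda>i. a * x i + b * y i) (\<lambda>i. a * x i + b * y i)
     = a^2 * sprod n x x + 2 * a * b * sprod n x y + b^2 * sprod n y y"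
  unfolding sprod_lincomb_right sprod_lincomb_left using sprod_commute[of n x y]
  by (simp add: power2_eq_square algebra_simps)

lemma sprod_self_scale: "sprod n (\<lambda>i. r * x i) (\<lambda>i. r * x i) = r^2 * sprod n x x"
  unfolding sprod_def by (simp add: sum_distrib_left power2_eq_square mult_ac)

lemma sprod_self_nonneg: "0 \<le> sprod n x x"
  unfolding sprod_def by (auto intro: sum_nonneg)

lemma sprod_self_eq_0D: "sprod n x x = 0 \<Longrightarrow> i < n \<Longrightarrow> x i = 0"
  unfolding sprod_def by (subst (asm) sum_nonneg_eq_0_iff) auto

lemma sprod_self_eq_1_nonzero: "sprod n x x = 1 \<Longrightarrow> \<exists>i<n. x i \<noteq> 0"
  unfolding sprod_def by (metis (no_types, lifting) lessThan_iff mult_zero_left sum.neutral zero_neq_one)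

lemma abs_le_1_if_sprod_self_eq_1:
  assumes "sprod n y y = 1" and "i < n"
  shows "\<bar>y i\<bar> \<le> 1"
proof -
  have "(y i)^2 \<le> sprod n y y"
    unfolding sprod_def using assms(2) member_le_sum[of i "{..<n}" "\<lambda>j. y j * y j"]
    by (simp add: power2_eq_square)
  then show ?thesis using assms(1) abs_le_square_iff[of "y i" 1] by simp
qed

lemma sprod_abs_self: "sprod n (\<lambda>i. \<bar>x i\<bar>) (\<lambda>i. \<bar>x i\<bar>) = sprod n x x"
  unfolding sprod_def by (simp add: abs_mult_self_eq)

lemma sprod_sqrt_weights:
  assumes "\<forall>i<n. 0 \<le> \<eta> i"
  shows "sprod n (\<lambda>i. sqrt (\<eta> i) * u i) (\<lambda>i. sqrt (\<eta> i) * u i) = (\<Sum>i<n. \<eta> i * (u i)^2)"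
  unfolding sprod_def using assms by (intro sum.cong refl) (simp add: power2_eq_square mult_ac)

lemma sprod_Cauchy_Schwarz: "(sprod n x y)^2 \<le> sprod n x x * sprod n y y"
  using Cauchy_Schwarz_ineq_sum[of x y "{..<n}"] by (simp add: sprod_def power2_eq_square)

lemma mvmult_lincomb:
  "mvmult n H (\<lambda>i. a * y i + b * z i) = (\<lambda>i. a * mvmult n H y i + b * mvmult n H z i)"
  unfolding mvmult_def by (auto simp: sum.distrib sum_distrib_left algebra_simps)

lemma sprod_mvmult_eq:
  assumes "\<And>i. i < n \<Longrightarrow> mvmult n H p i = m * u i"
  shows "sprod n y (mvmult n H p) = m * sprod n y u"
  unfolding sprod_def using assms by (simp add: sum_distrib_left mult_ac)

lemma qform_eq_double_sum: "qform n H x = (\<Sum>i<n. \<Sum>j<n. x i * H i j * x j)"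
  unfolding qform_def sprod_def mvmult_def by (simp add: sum_distrib_left mult.assoc)

lemma qform_cong: "(\<And>i. i < n \<Longrightarrow> x i = y i) \<Longrightarrow> qform n H x = qform n H y"
  unfolding qform_eq_double_sum by (intro sum.cong refl) simp_all

lemma qform_scale: "qform n H (\<lambda>i. r * x i) = r^2 * qform n H x"
  unfolding qform_eq_double_sum by (simp add: sum_distrib_left power2_eq_square mult_ac)

lemma qform_weighted_eigenvector:
  assumes "(\<Sum>i<n. c i * (u i)^2) = 1"
    and "\<And>i. i < n \<Longrightarrow> mvmult n H (\<lambda>j. c j * u j) i = m * u i"
  shows "qform n H (\<lambda>j. c j * u j) = m"
proof -
  have "qform n H (\<lambda>j. c j * u j) = m * (\<Sum>i<n. c i * (u i)^2)" unfolding qform_def using assms(2)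
    by (simp add: sprod_mvmult_eq sprod_def power2_eq_square mult_ac sum_distrib_left)
  then show ?thesis using assms(1) by simp
qed

lemma qform_eigenvector:
  "(\<And>i. i < n \<Longrightarrow> mvmult n H z i = m * z i) \<Longrightarrow> qform n H z = m * sprod n z z"
  unfolding qform_def by (rule sprod_mvmult_eq)

lemma sprod_mvmult_commute:
  assumes "symmetric_form n H"
  shows "sprod n x (mvmult n H y) = sprod n y (mvmult n H x)"
proof -
  have "sprod n x (mvmult n H y) = (\<Sum>i<n. \<Sum>j<n. x i * H i j * y j)"
    unfolding sprod_def mvmult_def by (simp add: sum_distrib_left mult.assoc)
  also have "\<dots> = (\<Sum>j<n. \<Sum>i<n. x i * H i j * y j)" by (rule sum.swap)
  also have "\<dots> = (\<Sum>j<n. \<Sum>i<n. y j * H j i * x i)"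
    using assms unfolding symmetric_form_def by (intro sum.cong refl) (auto simp: mult_ac)
  also have "\<dots> = sprod n y (mvmult n H x)"
    unfolding sprod_def mvmult_def by (simp add: sum_distrib_left mult.assoc)
  finally show ?thesis .
qed

lemma qform_lincomb:
  assumes "symmetric_form n H"
  shows "qform n H (\<lambda>i. a * x i + b * y i)
     = a^2 * qform n H x + 2 * a * b * sprod n x (mvmult n H y) + b^2 * qform n H y"
proof -
  have "qform n H (\<lambda>i. a * x i + b * y i)
      = a * (a * qform n H x + b * sprod n y (mvmult n H x))
        + b * (a * sprod n x (mvmult n H y) + b * qform n H y)"
    unfolding qform_def mvmult_lincomb sprod_lincomb_right sprod_lincomb_left by simp
  then show ?thesis
    using sprod_mvmult_commute[OF assms, of y x] by (simp add: power2_eq_square algebra_simps)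
qed

lemma pos_semidef_Cauchy_Schwarz:
  assumes H: "symmetric_form n H" and psd: "pos_semidef_form n H" and p: "0 < qform n H p"
  shows "(sprod n y (mvmult n H p))^2 \<le> qform n H y * qform n H p"
proof -
  define b where "b = sprod n y (mvmult n H p)"
  have "0 \<le> qform n H (\<lambda>i. qform n H p * y i + (- b) * p i)"
    using psd unfolding pos_semidef_form_def by blast
  also have "\<dots> = qform n H p * (qform n H p * qform n H y - b^2)"
    unfolding qform_lincomb[OF H] b_def by (simp add: power2_eq_square algebra_simps)
  finally have "0 \<le> qform n H p * qform n H y - b^2"
    using p by (simp add: zero_le_mult_iff)
  then show ?thesis unfolding b_def by (simp add: algebra_simps)
qed

lemma reverse_Cauchy_Schwarz:
  assumes H: "symmetric_form n H" and hyp: "nonpos_on_hyperplane n H" and p: "0 < qform n H p"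
  shows "qform n H y * qform n H p \<le> (sprod n y (mvmult n H p))^2"
proof (rule ccontr)
  obtain z where nonpos: "\<And>w. sprod n w z = 0 \<Longrightarrow> qform n H w \<le> 0"
    using hyp unfolding nonpos_on_hyperplane_def by blast
  define b where "b = sprod n y (mvmult n H p)"
  define \<alpha> where "\<alpha> = sprod n p z"
  define \<beta> where "\<beta> = - sprod n y z"
  define w where "w = (\<lambda>i. \<alpha> * y i + \<beta> * p i)"
  assume "\<not> ?thesis"
  then have gap: "0 < qform n H y * qform n H p - b^2" unfolding b_def by simp
  have "\<alpha> \<noteq> 0" using nonpos[of p] p unfolding \<alpha>_def by force
  have "sprod n w z = 0"
    unfolding w_def sprod_lincomb_left \<alpha>_def \<beta>_def by (simp add: mult.commute)
  then have "qform n H p * qform n H w \<le> 0"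
    using nonpos p by (simp add: mult_nonneg_nonpos)
  moreover have "qform n H p * qform n H w
      = (\<alpha> * b + \<beta> * qform n H p)^2 + \<alpha>^2 * (qform n H y * qform n H p - b^2)"
    unfolding w_def qform_lincomb[OF H] b_def by (simp add: power2_eq_square algebra_simps)
  moreover have "0 < \<alpha>^2 * (qform n H y * qform n H p - b^2)"
    using \<open>\<alpha> \<noteq> 0\<close> gap by simp
  ultimately show False
    by (metis add_nonneg_pos not_le zero_le_power2)
qed

lemma quadratic_nonneg_imp_linear_coeff_0:
  fixes b g :: real
  assumes nonneg: "\<And>t. 0 \<le> 2 * t * b + t^2 * g" and g: "0 \<le> g"
  shows "b = 0"
proof (rule ccontr)
  assume "b \<noteq> 0"
  define t where "t = - b / (g + 1)"
  have g1: "0 < g + 1" using g by simp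
  have "0 \<le> (2 * t * b + t^2 * g) * (g + 1)^2" using nonneg[of t] by simp
  also have "(2 * t * b + t^2 * g) * (g + 1)^2 = 2 * b * (t * (g + 1)) * (g + 1) + (t * (g + 1))^2 * g"
    by (simp add: power2_eq_square algebra_simps)
  also have "t * (g + 1) = - b" unfolding t_def using g1 by simp
  also have "2 * b * (- b) * (g + 1) + (- b)^2 * g = b^2 * (- g - 2)"
    by (simp add: power2_eq_square algebra_simps)
  finally show False using \<open>b \<noteq> 0\<close> g by (simp add: zero_le_mult_iff)
qed

lemma rayleigh_maximiser_eigenvector:
  assumes H: "symmetric_form n H" and bound: "\<And>x. qform n H x \<le> m * sprod n x x"
    and z: "qform n H z = m * sprod n z z" and i: "i < n"
  shows "mvmult n H z i = m * z i"
proof -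
  \<comment> \<open>z maximises qform n H x - m * sprod n x x; the first variation of this function at z
    in the direction w = m z - H z equals 2 * sprod n w w, so it must vanish.\<close>
  define w where "w = (\<lambda>i. m * z i - mvmult n H z i)"
  define b where "b = sprod n w w"
  define g where "g = m * sprod n w w - qform n H w"
  have g: "0 \<le> g" using bound[of w] unfolding g_def by simp
  have b: "m * sprod n w z - sprod n w (mvmult n H z) = b"
  proof -
    have "sprod n w w = sprod n w (\<lambda>i. m * z i + (-1) * mvmult n H z i)"
      unfolding w_def by simp
    then show ?thesis unfolding b_def sprod_lincomb_right by simp
  qed
  have "0 \<le> 2 * t * b + t^2 * g" for t
  proof -
    have "qform n H (\<lambda>i. 1 * z i + t * w i)
        \<le> m * sprod n (\<lambda>i. 1 * z i + t * w i) (\<lambda>i. 1 * z i + t * w i)"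
      by (rule bound)
    then have "0 \<le> 2 * t * (m * sprod n z w - sprod n z (mvmult n H w))
        + t^2 * (m * sprod n w w - qform n H w)"
      unfolding qform_lincomb[OF H] sprod_self_lincomb using z by (simp add: algebra_simps)
    then show ?thesis
      unfolding b[symmetric] g_def sprod_mvmult_commute[OF H, of z w] sprod_commute[of n z w] .
  qed
  then have "b = 0" using g by (rule quadratic_nonneg_imp_linear_coeff_0)
  then have "w i = 0" unfolding b_def using i by (rule sprod_self_eq_0D)
  then show ?thesis unfolding w_def by simp
qed

lemma continuous_on_coordinate [continuous_intros]:
  "continuous_on S (\<lambda>x :: nat \<Rightarrow> real. x i)"
  by (rule continuous_on_subset[OF continuous_on_product_coordinates subset_UNIV])

lemma qform_attains_max_on_sphere:
  assumes n: "n \<ge> 1"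
  obtains z where "sprod n z z = 1" "\<And>y. sprod n y y = 1 \<Longrightarrow> qform n H y \<le> qform n H z"
proof -
  define B where "B = (\<lambda>i :: nat. if i < n then {-1..1 :: real} else {0})"
  define T where "T = PiE UNIV B \<inter> {x. sprod n x x = 1}"
  have "compactin (product_topology (\<lambda>i. euclidean) UNIV) (PiE UNIV B)"
    by (subst compactin_PiE) (auto simp: B_def)
  then have "compact (PiE UNIV B)" by (simp add: euclidean_product_topology)
  moreover have "closed {x :: nat \<Rightarrow> real. sprod n x x = 1}"
    unfolding sprod_def by (intro closed_Collect_eq continuous_intros)
  ultimately have "compact T" unfolding T_def by (rule compact_Int_closed)
  moreover have "(\<lambda>i. if i = 0 then 1 else 0) \<in> T"
    unfolding T_def B_def sprod_def using n
    by (auto simp: PiE_def extensional_def sum.remove[of "{..<n}" 0])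
  then have "T \<noteq> {}" by blast
  moreover have "continuous_on T (qform n H)"
    unfolding qform_eq_double_sum by (intro continuous_intros)
  ultimately obtain z where "z \<in> T" and max: "\<And>y. y \<in> T \<Longrightarrow> qform n H y \<le> qform n H z"
    using continuous_attains_sup by metis
  show ?thesis
  proof (rule that)
    show "sprod n z z = 1" using \<open>z \<in> T\<close> unfolding T_def by simp
    fix y assume y: "sprod n y y = 1"
    define y' where "y' = (\<lambda>i. if i < n then y i else 0)"
    have "sprod n y' y' = sprod n y y" unfolding sprod_def y'_def by simp
    then have "y' \<in> T" using y abs_le_1_if_sprod_self_eq_1[OF y]
      unfolding T_def B_def y'_def by (auto simp: PiE_def extensional_def abs_le_iff)
    then have "qform n H y' \<le> qform n H z" by (rule max)
    moreover have "qform n H y' = qform n H y" by (rule qform_cong) (simp add: y'_def)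
    ultimately show "qform n H y \<le> qform n H z" by simp
  qed
qed

lemma symmetric_form_top_eigenpair:
  assumes n: "n \<ge> 1" and H: "symmetric_form n H"
  obtains m z where "sprod n z z = 1" "\<And>x. qform n H x \<le> m * sprod n x x"
    "\<And>i. i < n \<Longrightarrow> mvmult n H z i = m * z i"
proof -
  obtain z where z: "sprod n z z = 1"
    and max: "\<And>y. sprod n y y = 1 \<Longrightarrow> qform n H y \<le> qform n H z"
    by (rule qform_attains_max_on_sphere[OF n]) (rule that)
  define m where "m = qform n H z"
  have bound: "qform n H x \<le> m * sprod n x x" for x
  proof (cases "sprod n x x = 0")
    case True
    have "qform n H x = 0"
      unfolding qform_eq_double_sum by (intro sum.neutral ballI) (simp add: sprod_self_eq_0D[OF True])
    then show ?thesis using True by simp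
  next
    case False
    then have pos: "0 < sprod n x x" using sprod_self_nonneg[of n x] by simp
    define s where "s = sqrt (sprod n x x)"
    have s: "0 < s" "s^2 = sprod n x x" using pos unfolding s_def by auto
    have unit: "sprod n (\<lambda>i. (1 / s) * x i) (\<lambda>i. (1 / s) * x i) = 1"
      unfolding sprod_self_scale using s pos by (simp add: power_divide)
    have "qform n H (\<lambda>i. (1 / s) * x i) \<le> m" unfolding m_def by (rule max[OF unit])
    then have "qform n H x / sprod n x x \<le> m" unfolding qform_scale using s by (simp add: power_divide)
    then show ?thesis using pos by (simp add: field_simps)
  qed
  have "mvmult n H z i = m * z i" if "i < n" for i
    using rayleigh_maximiser_eigenvector[OF H bound _ that] z by (simp add: m_def)
  with z bound show ?thesis by (rule that)
qed

lemma qform_le_qform_abs: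
  assumes "\<forall>i<n. \<forall>j<n. 0 \<le> H i j"
  shows "qform n H x \<le> qform n H (\<lambda>i. \<bar>x i\<bar>)"
  unfolding qform_eq_double_sum
proof (intro sum_mono)
  fix i j assume "i \<in> {..<n}" "j \<in> {..<n}"
  then have "0 \<le> H i j" using assms by simp
  then show "x i * H i j * x j \<le> \<bar>x i\<bar> * H i j * \<bar>x j\<bar>"
    using abs_ge_self[of "x i * H i j * x j"] by (simp add: abs_mult)
qed

lemma qform_nonneg_if_nonneg:
  assumes "\<forall>i<n. \<forall>j<n. 0 \<le> H i j" and "\<forall>i<n. 0 \<le> x i"
  shows "0 \<le> qform n H x"
  unfolding qform_eq_double_sum using assms by (intro sum_nonneg mult_nonneg_nonneg) auto

lemma top_eigenvalue_nonneg:
  assumes H: "\<forall>i<n. \<forall>j<n. 0 \<le> H i j"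
    and bound: "\<And>x. qform n H x \<le> m * sprod n x x" and z: "sprod n z z = 1"
  shows "0 \<le> m"
proof -
  have "0 \<le> qform n H (\<lambda>i. \<bar>z i\<bar>)" by (rule qform_nonneg_if_nonneg[OF H]) simp
  also have "\<dots> \<le> m * sprod n (\<lambda>i. \<bar>z i\<bar>) (\<lambda>i. \<bar>z i\<bar>)" by (rule bound)
  finally show ?thesis using z by (simp add: sprod_abs_self)
qed

lemma complex_eigenvalue_norm_le:
  fixes y :: "nat \<Rightarrow> complex"
  assumes H: "\<forall>i<n. \<forall>j<n. 0 \<le> H i j"
    and bound: "\<And>x. qform n H x \<le> m * sprod n x x"
    and ev: "\<And>i. i < n \<Longrightarrow> (\<Sum>j<n. complex_of_real (H i j) * y j) = \<mu> * y i"
    and nz: "i0 < n" "y i0 \<noteq> 0"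
  shows "cmod \<mu> \<le> m"
proof -
  \<comment> \<open>Bound the form y* H y by the real form of the moduli r = |y|.\<close>
  define r where "r = (\<lambda>i. cmod (y i))"
  have rr: "sprod n r r = (\<Sum>i<n. (cmod (y i))^2)"
    unfolding sprod_def r_def by (simp add: power2_eq_square)
  have pos: "0 < sprod n r r"
  proof -
    have "0 < (cmod (y i0))^2" using nz by simp
    also have "\<dots> \<le> (\<Sum>i<n. (cmod (y i))^2)" using nz by (intro member_le_sum) auto
    finally show ?thesis using rr by simp
  qed
  have "\<mu> * (\<Sum>i<n. cnj (y i) * y i) = (\<Sum>i<n. cnj (y i) * (\<Sum>j<n. complex_of_real (H i j) * y j))"
    using ev by (simp add: sum_distrib_left mult_ac)
  then have eq: "\<mu> * (\<Sum>i<n. cnj (y i) * y i)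
      = (\<Sum>i<n. \<Sum>j<n. cnj (y i) * complex_of_real (H i j) * y j)"
    by (simp add: sum_distrib_left mult.assoc)
  have "(\<Sum>i<n. cnj (y i) * y i) = complex_of_real (sprod n r r)"
    unfolding rr of_real_sum
    by (intro sum.cong refl) (metis complex_norm_square of_real_power mult.commute)
  then have "cmod \<mu> * sprod n r r = cmod (\<mu> * (\<Sum>i<n. cnj (y i) * y i))"
    using pos by (simp add: norm_mult)
  also have "\<dots> \<le> (\<Sum>i<n. \<Sum>j<n. cmod (cnj (y i) * complex_of_real (H i j) * y j))"
    unfolding eq by (rule order_trans[OF norm_sum sum_mono[OF norm_sum]])
  also have "\<dots> = qform n H r"
    unfolding qform_eq_double_sum using H by (intro sum.cong refl) (simp add: norm_mult r_def)
  also have "\<dots> \<le> m * sprod n r r" by (rule bound)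
  finally show ?thesis using pos by simp
qed

definition weighted_form :: "(nat \<Rightarrow> nat \<Rightarrow> real) \<Rightarrow> (nat \<Rightarrow> real) \<Rightarrow> nat \<Rightarrow> nat \<Rightarrow> real" where
  "weighted_form H \<eta> = (\<lambda>i j. sqrt (\<eta> i) * H i j * sqrt (\<eta> j))"

lemma qform_weighted_form:
  "qform n (weighted_form H \<eta>) x = qform n H (\<lambda>i. sqrt (\<eta> i) * x i)"
  unfolding qform_eq_double_sum weighted_form_def by (simp add: mult_ac)

lemma symmetric_weighted_form: "symmetric_form n H \<Longrightarrow> symmetric_form n (weighted_form H \<eta>)"
  unfolding symmetric_form_def weighted_form_def by (simp add: mult_ac)

lemma weighted_form_nonneg:
  assumes "\<forall>i<n. \<forall>j<n. 0 \<le> H i j" and "\<forall>i<n. 0 \<le> \<eta> i"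
  shows "\<forall>i<n. \<forall>j<n. 0 \<le> weighted_form H \<eta> i j"
  unfolding weighted_form_def using assms by simp

lemma qform_weighted_form_scale:
  assumes "0 \<le> k"
  shows "qform n (weighted_form H (\<lambda>i. k * \<eta> i)) x = k * qform n (weighted_form H \<eta>) x"
proof -
  have "(\<lambda>i. sqrt (k * \<eta> i) * x i) = (\<lambda>i. sqrt k * (sqrt (\<eta> i) * x i))"
    by (simp add: real_sqrt_mult mult.assoc)
  then show ?thesis using assms by (simp add: qform_weighted_form qform_scale)
qed

lemma qform_weighted_form_mono:
  assumes H: "\<forall>i<n. \<forall>j<n. 0 \<le> H i j"
    and \<eta>: "\<forall>i<n. 0 \<le> \<eta> i" and le: "\<And>i. i < n \<Longrightarrow> \<eta> i \<le> \<eta>' i"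
    and x: "\<forall>i<n. 0 \<le> x i"
  shows "qform n (weighted_form H \<eta>) x \<le> qform n (weighted_form H \<eta>') x"
  unfolding qform_eq_double_sum weighted_form_def
proof (intro sum_mono)
  fix i j assume ij: "i \<in> {..<n}" "j \<in> {..<n}"
  then have "0 \<le> \<eta>' i" using \<eta> le by (meson lessThan_iff order_trans)
  with ij have "sqrt (\<eta> i) * sqrt (\<eta> j) \<le> sqrt (\<eta>' i) * sqrt (\<eta>' j)"
    using \<eta> le by (intro mult_mono) auto
  then have "(sqrt (\<eta> i) * sqrt (\<eta> j)) * (x i * H i j * x j)
      \<le> (sqrt (\<eta>' i) * sqrt (\<eta>' j)) * (x i * H i j * x j)"
    using ij H x by (intro mult_right_mono) auto
  then show "x i * (sqrt (\<eta> i) * H i j * sqrt (\<eta> j)) * x j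
      \<le> x i * (sqrt (\<eta>' i) * H i j * sqrt (\<eta>' j)) * x j"
    by (simp add: mult_ac)
qed

lemma weighted_form_eigenvector_lift:
  assumes \<eta>: "\<forall>i<n. 0 \<le> \<eta> i" and m: "m \<noteq> 0"
    and ev: "\<And>i. i < n \<Longrightarrow> mvmult n (weighted_form H \<eta>) z i = m * z i"
  obtains u where "\<And>i. i < n \<Longrightarrow> sqrt (\<eta> i) * u i = z i"
    "\<And>i. i < n \<Longrightarrow> mvmult n H (\<lambda>j. \<eta> j * u j) i = m * u i"
proof -
  define u where "u = (\<lambda>i. mvmult n H (\<lambda>j. sqrt (\<eta> j) * z j) i / m)"
  have zu: "sqrt (\<eta> i) * u i = z i" if "i < n" for i
  proof -
    have "sqrt (\<eta> i) * mvmult n H (\<lambda>j. sqrt (\<eta> j) * z j) i = mvmult n (weighted_form H \<eta>) z i"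
      unfolding mvmult_def weighted_form_def by (simp add: sum_distrib_left mult_ac)
    then show ?thesis using ev[OF that] m unfolding u_def by (simp add: field_simps)
  qed
  have "\<eta> j * u j = sqrt (\<eta> j) * z j" if "j < n" for j
    using zu[OF that, symmetric] \<eta> that by (simp flip: mult.assoc)
  then have "mvmult n H (\<lambda>j. \<eta> j * u j) i = m * u i" for i
    unfolding mvmult_def using m by (simp add: u_def mvmult_def)
  with zu show ?thesis by (rule that)
qed

section \<open>Complex eigenvalues of real matrices\<close>

lemma orthonormal_complex_comb_eq_0:
  assumes z1: "sprod n z1 z1 = 1" and z2: "sprod n z2 z2 = 1" and orth: "sprod n z1 z2 = 0"
    and comb: "\<And>i. i < n \<Longrightarrow> c1 * complex_of_real (z1 i) + c2 * complex_of_real (z2 i) = 0"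
  shows "c1 = 0 \<and> c2 = 0"
proof -
  have sprod_comb: "(\<Sum>i<n. complex_of_real (y i) * (c1 * complex_of_real (z1 i) + c2 * complex_of_real (z2 i)))
      = c1 * complex_of_real (sprod n y z1) + c2 * complex_of_real (sprod n y z2)" for y
    unfolding sprod_def by (simp add: sum.distrib sum_distrib_left algebra_simps)
  have "c1 * complex_of_real (sprod n z1 z1) + c2 * complex_of_real (sprod n z1 z2) = 0"
    unfolding sprod_comb[symmetric] using comb by simp
  moreover have "c1 * complex_of_real (sprod n z2 z1) + c2 * complex_of_real (sprod n z2 z2) = 0"
    unfolding sprod_comb[symmetric] using comb by simp
  ultimately show ?thesis using z1 z2 orth sprod_commute[of n z2 z1] by simp
qed

lemma eigenvector_cmatI:
  assumes M: "M \<in> carrier_mat n n"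
    and e: "\<And>i. i < n \<Longrightarrow> (\<Sum>j<n. M $$ (i,j) * w j) = c * w i"
    and nz: "i0 < n" "w i0 \<noteq> 0"
  shows "eigenvector (cmat M) (vec n (\<lambda>i. complex_of_real (w i))) (complex_of_real c)"
proof -
  define v where "v = vec n (\<lambda>i. complex_of_real (w i))"
  have "cmat M *\<^sub>v v = complex_of_real c \<cdot>\<^sub>v v"
  proof (rule eq_vecI)
    fix i assume "i < dim_vec (complex_of_real c \<cdot>\<^sub>v v)"
    then have i: "i < n" unfolding v_def by simp
    have "(cmat M *\<^sub>v v) $ i = complex_of_real (\<Sum>j<n. M $$ (i,j) * w j)"
      using M i by (simp add: cmat_def mult_mat_vec_def scalar_prod_def v_def atLeast0LessThan)
    then show "(cmat M *\<^sub>v v) $ i = (complex_of_real c \<cdot>\<^sub>v v) $ i"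
      using e[OF i] i by (simp add: v_def)
  qed (use M in \<open>simp add: cmat_def v_def\<close>)
  moreover have "v \<noteq> 0\<^sub>v n"
  proof
    assume "v = 0\<^sub>v n"
    then have "v $ i0 = 0" using nz by simp
    then show False using nz unfolding v_def by simp
  qed
  moreover have "v \<in> carrier_vec n" unfolding v_def by simp
  ultimately show ?thesis
    unfolding eigenvector_def v_def[symmetric] using M by (simp add: cmat_def)
qed

lemma eigenvalue_cmatD:
  assumes M: "M \<in> carrier_mat n n" and ev: "eigenvalue (cmat M) \<mu>"
  obtains v i0 where "i0 < n" "v i0 \<noteq> 0"
    "\<And>i. i < n \<Longrightarrow> (\<Sum>j<n. complex_of_real (M $$ (i,j)) * v j) = \<mu> * v i"
proof -
  from ev obtain v where v: "v \<in> carrier_vec n" "v \<noteq> 0\<^sub>v n" "cmat M *\<^sub>v v = \<mu> \<cdot>\<^sub>v v"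
    unfolding eigenvalue_def eigenvector_def using M by (auto simp: cmat_def)
  have "\<exists>i0<n. v $ i0 \<noteq> 0"
  proof (rule ccontr)
    assume "\<not> ?thesis"
    then have "v = 0\<^sub>v n" using v by (intro eq_vecI) auto
    then show False using v by simp
  qed
  moreover have "(\<Sum>j<n. complex_of_real (M $$ (i,j)) * v $ j) = \<mu> * v $ i" if i: "i < n" for i
  proof -
    have "(cmat M *\<^sub>v v) $ i = (\<mu> \<cdot>\<^sub>v v) $ i" using v by simp
    then show ?thesis
      using M i v by (simp add: cmat_def mult_mat_vec_def scalar_prod_def atLeast0LessThan)
  qed
  ultimately show ?thesis using that[of _ "\<lambda>i. v $ i"] by blast
qed

lemma kernel_dim_le_order_char_poly:
  fixes M :: "complex mat"
  assumes M: "M \<in> carrier_mat n n"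
  shows "kernel_dim (char_matrix M r) \<le> order r (char_poly M)"
proof -
  obtain as where "char_poly M = (\<Prod>a\<leftarrow>as. [:- a, 1:])"
    using char_poly_factorized[OF M] by auto
  then obtain n_as where jnf: "jordan_nf M n_as" using jordan_nf_exists[OF M] by blast
  have "kernel_dim (char_matrix M r) = dim_gen_eigenspace M r 1"
    unfolding dim_gen_eigenspace_def using M by simp
  also have "\<dots> = (\<Sum>k \<leftarrow> map fst [(k, e)\<leftarrow>n_as. e = r]. min 1 k)"
    by (rule dim_gen_eigenspace[OF jnf])
  also have "\<dots> \<le> sum_list (map fst (filter (\<lambda>ke. snd ke = r) n_as))"
    by (induct n_as) (auto simp: min_def)
  also have "\<dots> = order r (char_poly M)"
    by (rule jordan_nf_order[OF jnf, symmetric])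
  finally show ?thesis .
qed

lemma two_le_kernel_dim:
  fixes C :: "'a :: field mat"
  assumes C: "C \<in> carrier_mat n n" and v: "v1 \<in> mat_kernel C" "v2 \<in> mat_kernel C"
    and indep: "\<And>c1 c2. c1 \<cdot>\<^sub>v v1 + c2 \<cdot>\<^sub>v v2 = 0\<^sub>v n \<Longrightarrow> c1 = 0 \<and> c2 = 0"
  shows "2 \<le> kernel_dim C"
proof -
  interpret K: kernel n n C by unfold_locales (rule C)
  have carrier: "v1 \<in> carrier_vec n" "v2 \<in> carrier_vec n"
    using v C unfolding mat_kernel_def by auto
  have "v1 \<noteq> v2"
  proof
    assume "v1 = v2"
    then have "1 \<cdot>\<^sub>v v1 + (-1) \<cdot>\<^sub>v v2 = 0\<^sub>v n" using carrier by (intro eq_vecI) auto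
    from indep[OF this] show False by simp
  qed
  have "K.lin_indpt {v1, v2}"
  proof (rule K.Ker.finite_lin_indpt2)
    show "finite {v1, v2}" by simp
    show "{v1, v2} \<subseteq> mat_kernel C" using v by auto
    fix a assume "a \<in> {v1, v2} \<rightarrow> UNIV" and lc: "K.lincomb a {v1, v2} = 0\<^sub>v n"
    have "K.lincomb a ({v2} \<union> {v1}) = a v1 \<cdot>\<^sub>v v1 + K.lincomb a {v2}"
      by (rule K.Ker.lincomb_insert) (use v \<open>v1 \<noteq> v2\<close> in auto)
    also have "K.lincomb a {v2} = a v2 \<cdot>\<^sub>v v2"
      unfolding K.Ker.lincomb_def using v by simp
    finally have "a v1 \<cdot>\<^sub>v v1 + a v2 \<cdot>\<^sub>v v2 = 0\<^sub>v n" using lc by (simp add: insert_commute)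
    from indep[OF this] show "\<forall>v\<in>{v1, v2}. a v = 0" by auto
  qed
  moreover obtain B where "finite B" "K.basis B" using kernel_basis_exists[OF C] by blast
  then have "K.Ker.fin_dim" unfolding K.Ker.fin_dim_def K.Ker.basis_def by blast
  ultimately have "card {v1, v2} \<le> K.dim" using v by (intro K.Ker.li_le_dim(2)) auto
  then show ?thesis using \<open>v1 \<noteq> v2\<close> by simp
qed

lemma order_char_poly_ge_2:
  fixes M :: "complex mat"
  assumes M: "M \<in> carrier_mat n n" and e: "eigenvector M v1 r" "eigenvector M v2 r"
    and indep: "\<And>c1 c2. c1 \<cdot>\<^sub>v v1 + c2 \<cdot>\<^sub>v v2 = 0\<^sub>v n \<Longrightarrow> c1 = 0 \<and> c2 = 0"
  shows "2 \<le> order r (char_poly M)"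
proof -
  have "v1 \<in> mat_kernel (char_matrix M r)" "v2 \<in> mat_kernel (char_matrix M r)"
    using e M unfolding eigenvector_char_matrix[OF M] by (auto intro!: mat_kernelI[OF char_matrix_closed[OF M]])
  then have "2 \<le> kernel_dim (char_matrix M r)"
    by (rule two_le_kernel_dim[OF char_matrix_closed[OF M] _ _ indep])
  then show ?thesis using kernel_dim_le_order_char_poly[OF M] by (rule order.trans)
qed

section \<open>The symmetrization of K\<close>

locale symmetrization =
  fixes N :: nat and K :: "real mat" and d :: "nat \<Rightarrow> real" and A :: "nat \<Rightarrow> nat \<Rightarrow> real"
  assumes N_pos: "N \<ge> 1"
    and K_carrier: "K \<in> carrier_mat N N"
    and d_pos: "\<And>i. i < N \<Longrightarrow> 0 < d i"
    and K_entry: "\<And>i j. i < N \<Longrightarrow> j < N \<Longrightarrow> K $$ (i,j) = sqrt (d i) * A i j / sqrt (d j)"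
    and A_nonneg: "\<forall>i<N. \<forall>j<N. 0 \<le> A i j"
    and A_symmetric: "symmetric_form N A"
begin

lemma K_diag_entry: "i < N \<Longrightarrow> j < N \<Longrightarrow> (K * mat_diag N \<eta>) $$ (i,j) = K $$ (i,j) * \<eta> j"
  by (simp add: mat_diag_mult_right[OF K_carrier])

lemma K_diag_carrier: "K * mat_diag N \<eta> \<in> carrier_mat N N"
  using K_carrier by simp

lemma K_mult_scaled:
  assumes i: "i < N"
  shows "(\<Sum>j<N. K $$ (i,j) * (sqrt (d j) * w j)) = sqrt (d i) * mvmult N A w i"
  unfolding mvmult_def sum_distrib_left
proof (intro sum.cong refl)
  fix j assume "j \<in> {..<N}"
  then have "0 < sqrt (d j)" using d_pos by simp
  then show "K $$ (i,j) * (sqrt (d j) * w j) = sqrt (d i) * (A i j * w j)"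
    using i \<open>j \<in> {..<N}\<close> by (simp add: K_entry field_simps)
qed

lemma eigenvector_K_if_eigenvector_A:
  assumes ev: "\<And>i. i < N \<Longrightarrow> mvmult N A z i = r * z i" and nz: "i0 < N" "z i0 \<noteq> 0"
  shows "eigenvector (cmat K) (vec N (\<lambda>i. complex_of_real (sqrt (d i) * z i))) (complex_of_real r)"
proof (rule eigenvector_cmatI[OF K_carrier])
  fix i assume "i < N"
  then show "(\<Sum>j<N. K $$ (i,j) * (sqrt (d j) * z j)) = r * (sqrt (d i) * z i)"
    using K_mult_scaled ev by simp
next
  show "i0 < N" "sqrt (d i0) * z i0 \<noteq> 0" using nz d_pos[OF nz(1)] by auto
qed

lemma eigenvalue_K_if_eigenvector_A:
  assumes "\<And>i. i < N \<Longrightarrow> mvmult N A z i = r * z i" and "sprod N z z = 1"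
  shows "eigenvalue (cmat K) (complex_of_real r)"
  using eigenvector_K_if_eigenvector_A[OF assms(1)] sprod_self_eq_1_nonzero[OF assms(2)]
  unfolding eigenvalue_def by blast

lemma weighted_form_K_diag_eigenvector:
  assumes \<eta>: "\<forall>i<N. 0 \<le> \<eta> i" and i: "i < N"
  shows "(\<Sum>j<N. complex_of_real (weighted_form A \<eta> i j) * (complex_of_real (sqrt (\<eta> j) / sqrt (d j)) * v j))
    = complex_of_real (sqrt (\<eta> i) / sqrt (d i))
        * (\<Sum>j<N. complex_of_real ((K * mat_diag N \<eta>) $$ (i,j)) * v j)"
  unfolding sum_distrib_left
proof (intro sum.cong refl)
  fix j assume j: "j \<in> {..<N}"
  have "weighted_form A \<eta> i j * (sqrt (\<eta> j) / sqrt (d j))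
      = sqrt (\<eta> i) / sqrt (d i) * (K * mat_diag N \<eta>) $$ (i,j)"
    using i j \<eta> d_pos[of i] d_pos[of j]
    by (simp add: weighted_form_def K_diag_entry K_entry field_simps)
  then show "complex_of_real (weighted_form A \<eta> i j) * (complex_of_real (sqrt (\<eta> j) / sqrt (d j)) * v j)
      = complex_of_real (sqrt (\<eta> i) / sqrt (d i)) * (complex_of_real ((K * mat_diag N \<eta>) $$ (i,j)) * v j)"
    by (metis (no_types, lifting) mult.assoc of_real_mult)
qed

lemma K_diag_eigenvalue_norm_le:
  assumes \<eta>: "\<forall>i<N. 0 \<le> \<eta> i" and m: "0 \<le> m"
    and bound: "\<And>x. qform N (weighted_form A \<eta>) x \<le> m * sprod N x x"
    and \<mu>: "eigenvalue (cmat (K * mat_diag N \<eta>)) \<mu>"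
  shows "cmod \<mu> \<le> m"
proof (cases "\<mu> = 0")
  case True
  then show ?thesis using m by simp
next
  case False
  obtain v i where i: "i < N" "v i \<noteq> 0"
    and e: "\<And>i. i < N \<Longrightarrow> (\<Sum>j<N. complex_of_real ((K * mat_diag N \<eta>) $$ (i,j)) * v j) = \<mu> * v i"
    by (rule eigenvalue_cmatD[OF K_diag_carrier \<mu>]) (rule that)
  define y where "y = (\<lambda>j. complex_of_real (sqrt (\<eta> j) / sqrt (d j)) * v j)"
  have ey: "(\<Sum>j<N. complex_of_real (weighted_form A \<eta> i j) * y j) = \<mu> * y i" if "i < N" for i
    unfolding y_def weighted_form_K_diag_eigenvector[OF \<eta> that] e[OF that] by (simp add: mult_ac)
  have "(\<Sum>j<N. complex_of_real ((K * mat_diag N \<eta>) $$ (i,j)) * v j) \<noteq> 0"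
    using e[OF i(1)] False i(2) by simp
  then obtain j where j: "j < N" "(K * mat_diag N \<eta>) $$ (i,j) \<noteq> 0" "v j \<noteq> 0"
    by (metis (no_types, lifting) lessThan_iff mult_eq_0_iff of_real_0 sum.neutral)
  then have "y j \<noteq> 0" using i \<eta> d_pos[of j] by (simp add: y_def K_diag_entry)
  with weighted_form_nonneg[OF A_nonneg \<eta>] bound ey j(1) show ?thesis
    by (rule complex_eigenvalue_norm_le)
qed

lemma K_diag_eigenvalue_if_weighted_form_eigenvector:
  assumes \<eta>: "\<forall>i<N. 0 \<le> \<eta> i" and m: "m \<noteq> 0"
    and ev: "\<And>i. i < N \<Longrightarrow> mvmult N (weighted_form A \<eta>) z i = m * z i" and z: "sprod N z z = 1"
  shows "eigenvalue (cmat (K * mat_diag N \<eta>)) (complex_of_real m)"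
proof -
  obtain u where zu: "\<And>i. i < N \<Longrightarrow> sqrt (\<eta> i) * u i = z i"
    and eu: "\<And>i. i < N \<Longrightarrow> mvmult N A (\<lambda>j. \<eta> j * u j) i = m * u i"
    using weighted_form_eigenvector_lift[OF \<eta> m ev] by auto
  obtain i0 where i0: "i0 < N" "z i0 \<noteq> 0" using sprod_self_eq_1_nonzero[OF z] by blast
  have "eigenvector (cmat (K * mat_diag N \<eta>)) (vec N (\<lambda>i. complex_of_real (sqrt (d i) * u i)))
      (complex_of_real m)"
  proof (rule eigenvector_cmatI[OF K_diag_carrier])
    fix i assume i: "i < N"
    have "(\<Sum>j<N. (K * mat_diag N \<eta>) $$ (i,j) * (sqrt (d j) * u j))
        = (\<Sum>j<N. K $$ (i,j) * (sqrt (d j) * (\<eta> j * u j)))"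
      using i by (intro sum.cong refl) (simp add: K_diag_entry mult_ac)
    also have "\<dots> = sqrt (d i) * mvmult N A (\<lambda>j. \<eta> j * u j) i" by (rule K_mult_scaled[OF i])
    finally show "(\<Sum>j<N. (K * mat_diag N \<eta>) $$ (i,j) * (sqrt (d j) * u j)) = m * (sqrt (d i) * u i)"
      using eu[OF i] by simp
  next
    show "i0 < N" "sqrt (d i0) * u i0 \<noteq> 0" using i0 zu[OF i0(1)] d_pos[OF i0(1)] by auto
  qed
  then show ?thesis unfolding eigenvalue_def by blast
qed

lemma Re_fun_eq_top_eigenvalue:
  assumes \<eta>: "\<forall>i<N. 0 \<le> \<eta> i" and z: "sprod N z z = 1"
    and bound: "\<And>x. qform N (weighted_form A \<eta>) x \<le> m * sprod N x x"
    and ev: "\<And>i. i < N \<Longrightarrow> mvmult N (weighted_form A \<eta>) z i = m * z i"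
  shows "Re_fun N K \<eta> = m"
proof -
  let ?M = "cmat (K * mat_diag N \<eta>)"
  have M: "?M \<in> carrier_mat N N" using K_diag_carrier by (simp add: cmat_def)
  have N: "0 < N" using N_pos by simp
  have m: "0 \<le> m" by (rule top_eigenvalue_nonneg[OF weighted_form_nonneg[OF A_nonneg \<eta>] bound z])
  obtain \<mu> where \<mu>: "eigenvalue ?M \<mu>" and rho: "spectral_radius ?M = cmod \<mu>"
    using spectral_radius_mem_max(1)[OF M N] unfolding spectrum_def by auto
  have "cmod \<mu> \<le> m" by (rule K_diag_eigenvalue_norm_le[OF \<eta> m bound \<mu>])
  moreover have "m \<le> spectral_radius ?M"
  proof (cases "m = 0")
    case False
    then have "eigenvalue ?M (complex_of_real m)"
      by (rule K_diag_eigenvalue_if_weighted_form_eigenvector[OF \<eta> _ ev z])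
    then have "norm (complex_of_real m) \<in> norm ` spectrum ?M"
      unfolding spectrum_def by (intro imageI) simp
    then show ?thesis using spectral_radius_mem_max(2)[OF M N] m by simp
  qed (simp add: rho)
  ultimately show ?thesis unfolding Re_fun_def using rho by linarith
qed

lemma Re_fun_top_eigenpair:
  assumes \<eta>: "\<forall>i<N. 0 \<le> \<eta> i"
  obtains z where "sprod N z z = 1"
    "\<And>i. i < N \<Longrightarrow> mvmult N (weighted_form A \<eta>) z i = Re_fun N K \<eta> * z i"
proof -
  obtain m z where z: "sprod N z z = 1"
    and bound: "\<And>x. qform N (weighted_form A \<eta>) x \<le> m * sprod N x x"
    and ev: "\<And>i. i < N \<Longrightarrow> mvmult N (weighted_form A \<eta>) z i = m * z i"
    by (rule symmetric_form_top_eigenpair[OF N_pos symmetric_weighted_form[OF A_symmetric]]) (rule that)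
  have Re: "Re_fun N K \<eta> = m" using \<eta> z bound ev by (rule Re_fun_eq_top_eigenvalue)
  show ?thesis by (rule that[OF z]) (simp add: Re ev)
qed

lemma Re_fun_upper_bound:
  assumes \<eta>: "\<forall>i<N. 0 \<le> \<eta> i"
  shows "qform N (weighted_form A \<eta>) x \<le> Re_fun N K \<eta> * sprod N x x"
proof -
  obtain m z where z: "sprod N z z = 1"
    and bound: "\<And>x. qform N (weighted_form A \<eta>) x \<le> m * sprod N x x"
    and ev: "\<And>i. i < N \<Longrightarrow> mvmult N (weighted_form A \<eta>) z i = m * z i"
    by (rule symmetric_form_top_eigenpair[OF N_pos symmetric_weighted_form[OF A_symmetric]]) (rule that)
  have "Re_fun N K \<eta> = m" using \<eta> z bound ev by (rule Re_fun_eq_top_eigenvalue)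
  then show ?thesis using bound by simp
qed

lemma Re_fun_nonneg: "0 \<le> Re_fun N K \<eta>"
proof -
  have "cmat (K * mat_diag N \<eta>) \<in> carrier_mat N N" using K_diag_carrier by (simp add: cmat_def)
  then have "Re_fun N K \<eta> \<in> norm ` spectrum (cmat (K * mat_diag N \<eta>))"
    unfolding Re_fun_def using N_pos by (intro spectral_radius_mem_max(1)) auto
  then show ?thesis by auto
qed

lemma Re_fun_scaled_mono:
  assumes x: "\<forall>i<N. 0 \<le> x i" and k: "0 \<le> k" and le: "\<And>i. i < N \<Longrightarrow> k * x i \<le> c i"
  shows "k * Re_fun N K x \<le> Re_fun N K c"
proof -
  have c: "\<forall>i<N. 0 \<le> c i"
  proof (intro allI impI)
    fix i assume "i < N"
    then have "0 \<le> k * x i" using x k by (simp add: mult_nonneg_nonneg)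
    then show "0 \<le> c i" using le[OF \<open>i < N\<close>] by linarith
  qed
  obtain z where z: "sprod N z z = 1"
    and ev: "\<And>i. i < N \<Longrightarrow> mvmult N (weighted_form A x) z i = Re_fun N K x * z i"
    by (rule Re_fun_top_eigenpair[OF x]) (rule that)
  let ?z = "\<lambda>i. \<bar>z i\<bar>"
  have "k * Re_fun N K x = k * qform N (weighted_form A x) z"
    using qform_eigenvector[OF ev] z by simp
  also have "\<dots> \<le> k * qform N (weighted_form A x) ?z"
    using qform_le_qform_abs[OF weighted_form_nonneg[OF A_nonneg x]] k by (rule mult_left_mono)
  also have "\<dots> = qform N (weighted_form A (\<lambda>i. k * x i)) ?z"
    by (rule qform_weighted_form_scale[OF k, symmetric])
  also have "\<dots> \<le> qform N (weighted_form A c) ?z"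
    by (rule qform_weighted_form_mono) (use A_nonneg x k le in \<open>auto intro: mult_nonneg_nonneg\<close>)
  also have "\<dots> \<le> Re_fun N K c * sprod N ?z ?z" by (rule Re_fun_upper_bound[OF c])
  also have "\<dots> = Re_fun N K c" using z by (simp add: sprod_abs_self)
  finally show ?thesis .
qed

lemma Re_fun_supporting_vector:
  assumes c: "\<forall>i<N. 0 \<le> c i" and pos: "Re_fun N K c \<noteq> 0"
  obtains u where "(\<Sum>i<N. c i * (u i)^2) = 1"
    "\<And>i. i < N \<Longrightarrow> mvmult N A (\<lambda>j. c j * u j) i = Re_fun N K c * u i"
proof -
  obtain z where z: "sprod N z z = 1"
    and ev: "\<And>i. i < N \<Longrightarrow> mvmult N (weighted_form A c) z i = Re_fun N K c * z i"
    by (rule Re_fun_top_eigenpair[OF c]) (rule that)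
  obtain u where zu: "\<And>i. i < N \<Longrightarrow> sqrt (c i) * u i = z i"
    and eu: "\<And>i. i < N \<Longrightarrow> mvmult N A (\<lambda>j. c j * u j) i = Re_fun N K c * u i"
    using weighted_form_eigenvector_lift[OF c pos ev] by auto
  have "sprod N z z = sprod N (\<lambda>i. sqrt (c i) * u i) (\<lambda>i. sqrt (c i) * u i)"
    unfolding sprod_def using zu by simp
  then have "(\<Sum>i<N. c i * (u i)^2) = 1" using z sprod_sqrt_weights[OF c] by simp
  then show ?thesis using eu by (rule that)
qed

lemma Re_fun_ge_supporting_linear:
  assumes psd: "pos_semidef_form N A" and \<eta>: "\<forall>i<N. 0 \<le> \<eta> i" and m: "0 < m"
    and u: "(\<Sum>i<N. c i * (u i)^2) = 1"
    and eu: "\<And>i. i < N \<Longrightarrow> mvmult N A (\<lambda>j. c j * u j) i = m * u i"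
  shows "m * (\<Sum>i<N. \<eta> i * (u i)^2) \<le> Re_fun N K \<eta>"
proof -
  define s where "s = (\<Sum>i<N. \<eta> i * (u i)^2)"
  define p where "p = (\<lambda>j. c j * u j)"
  define q where "q = (\<lambda>j. \<eta> j * u j)"
  have Ap: "sprod N y (mvmult N A p) = m * sprod N y u" for y
    using eu unfolding p_def by (rule sprod_mvmult_eq)
  have qp: "qform N A p = m" using u eu unfolding p_def by (rule qform_weighted_eigenvector)
  have qu: "sprod N q u = s" unfolding q_def s_def sprod_def by (simp add: power2_eq_square mult_ac)
  have "0 \<le> s" unfolding s_def using \<eta> by (intro sum_nonneg) simp
  show ?thesis
  proof (cases "s = 0")
    case True
    then show ?thesis using Re_fun_nonneg[of \<eta>] by (simp add: s_def)
  next
    case False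
    then have "0 < s" using \<open>0 \<le> s\<close> by simp
    have "(m * s)^2 \<le> qform N A q * m"
      using pos_semidef_Cauchy_Schwarz[OF A_symmetric psd, of p q] qp m by (simp add: Ap qu)
    then have "m * s * s \<le> qform N A q" using m by (simp add: power2_eq_square mult_ac)
    also have "qform N A q = qform N (weighted_form A \<eta>) (\<lambda>i. sqrt (\<eta> i) * u i)"
      unfolding qform_weighted_form using \<eta> by (intro qform_cong) (simp add: q_def mult.assoc[symmetric])
    also have "\<dots> \<le> Re_fun N K \<eta> * s"
      using Re_fun_upper_bound[OF \<eta>, of "\<lambda>i. sqrt (\<eta> i) * u i"]
      unfolding sprod_sqrt_weights[OF \<eta>] s_def .
    finally show ?thesis using \<open>0 < s\<close> by (simp add: s_def)
  qed
qed

lemma Re_fun_le_supporting_linear: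
  assumes hyp: "nonpos_on_hyperplane N A" and \<eta>: "\<forall>i<N. 0 \<le> \<eta> i" and m: "0 < m"
    and u: "(\<Sum>i<N. c i * (u i)^2) = 1"
    and eu: "\<And>i. i < N \<Longrightarrow> mvmult N A (\<lambda>j. c j * u j) i = m * u i"
  shows "Re_fun N K \<eta> \<le> m * (\<Sum>i<N. \<eta> i * (u i)^2)"
proof -
  define p where "p = (\<lambda>j. c j * u j)"
  have Ap: "sprod N y (mvmult N A p) = m * sprod N y u" for y
    using eu unfolding p_def by (rule sprod_mvmult_eq)
  have qp: "qform N A p = m" using u eu unfolding p_def by (rule qform_weighted_eigenvector)
  obtain z where z: "sprod N z z = 1"
    and ev: "\<And>i. i < N \<Longrightarrow> mvmult N (weighted_form A \<eta>) z i = Re_fun N K \<eta> * z i"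
    by (rule Re_fun_top_eigenpair[OF \<eta>]) (rule that)
  define y where "y = (\<lambda>i. sqrt (\<eta> i) * z i)"
  define x where "x = (\<lambda>i. sqrt (\<eta> i) * u i)"
  have "Re_fun N K \<eta> * m = qform N A y * qform N A p"
    using qform_eigenvector[OF ev] z qp unfolding qform_weighted_form y_def by simp
  also have "\<dots> \<le> (m * sprod N y u)^2"
    using reverse_Cauchy_Schwarz[OF A_symmetric hyp, of p y] qp m by (simp add: Ap)
  also have "sprod N y u = sprod N z x" unfolding sprod_def y_def x_def by (simp add: mult_ac)
  also have "(m * sprod N z x)^2 \<le> m^2 * (\<Sum>i<N. \<eta> i * (u i)^2)"
    using sprod_Cauchy_Schwarz[of N z x] z sprod_sqrt_weights[OF \<eta>, of u]
    by (simp add: x_def power_mult_distrib mult_left_mono)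
  finally show ?thesis using m by (simp add: power2_eq_square mult.assoc)
qed

lemma pos_semidef_if_eigenvalues_nonneg:
  assumes hyp: "\<forall>\<mu>. eigenvalue (cmat K) \<mu> \<longrightarrow> \<mu> \<in> \<real> \<and> Re \<mu> \<ge> 0"
  shows "pos_semidef_form N A"
  unfolding pos_semidef_form_def
proof (rule allI, rule ccontr)
  fix x assume neg: "\<not> 0 \<le> qform N A x"
  define B where "B = (\<lambda>i j. - A i j)"
  have "symmetric_form N B" using A_symmetric unfolding symmetric_form_def B_def by simp
  then obtain m z where z: "sprod N z z = 1" and bound: "\<And>x. qform N B x \<le> m * sprod N x x"
    and ev: "\<And>i. i < N \<Longrightarrow> mvmult N B z i = m * z i"
    by (rule symmetric_form_top_eigenpair[OF N_pos]) (rule that)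
  have "qform N B x = - qform N A x" unfolding qform_eq_double_sum B_def by (simp add: sum_negf)
  then have "0 < m * sprod N x x" using bound[of x] neg by simp
  then have "0 < m" using sprod_self_nonneg[of N x] by (auto simp: zero_less_mult_iff)
  moreover have "mvmult N A z i = (- m) * z i" if "i < N" for i
    using ev[OF that] unfolding mvmult_def B_def by (simp add: sum_negf)
  then have "eigenvalue (cmat K) (complex_of_real (- m))"
    using z by (rule eigenvalue_K_if_eigenvector_A)
  ultimately show False using hyp by force
qed

lemma second_positive_eigenvector:
  assumes n: "n \<ge> 1" and H: "symmetric_form n H"
    and z1: "sprod n z1 z1 = 1" and ev1: "\<And>i. i < n \<Longrightarrow> mvmult n H z1 i = m1 * z1 i"
    and w: "sprod n w z1 = 0" "0 < qform n H w"
  obtains m2 z2 where "0 < m2" "sprod n z2 z2 = 1" "sprod n z1 z2 = 0"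
    "\<And>i. i < n \<Longrightarrow> mvmult n H z2 i = m2 * z2 i"
proof -
  \<comment> \<open>A top eigenvector of the deflation B = H - m1 z1 z1^T with a positive eigenvalue is
    orthogonal to z1, hence also an eigenvector of H.\<close>
  define B where "B = (\<lambda>i j. H i j - m1 * z1 i * z1 j)"
  have B: "symmetric_form n B" using H unfolding symmetric_form_def B_def by (simp add: mult_ac)
  have mvmult_B: "mvmult n B x i = mvmult n H x i - m1 * z1 i * sprod n z1 x" for x i
    unfolding mvmult_def B_def sprod_def
    by (simp add: left_diff_distrib right_diff_distrib sum_subtractf sum_distrib_left mult_ac)
  obtain m2 z2 where z2: "sprod n z2 z2 = 1" and bound2: "\<And>x. qform n B x \<le> m2 * sprod n x x"
    and ev2: "\<And>i. i < n \<Longrightarrow> mvmult n B z2 i = m2 * z2 i"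
    by (rule symmetric_form_top_eigenpair[OF n B]) (rule that)
  have "mvmult n B w = (\<lambda>i. 1 * mvmult n H w i + (- m1 * sprod n z1 w) * z1 i)"
    by (rule ext) (simp add: mvmult_B algebra_simps)
  then have "qform n B w = qform n H w"
    using w(1) unfolding qform_def sprod_lincomb_right by (simp add: sprod_commute)
  then have "0 < m2 * sprod n w w" using bound2[of w] w(2) by simp
  then have m2: "0 < m2" using sprod_self_nonneg[of n w] by (auto simp: zero_less_mult_iff)
  have "mvmult n B z1 i = 0" if "i < n" for i unfolding mvmult_B using ev1[OF that] z1 by simp
  then have "sprod n z2 (mvmult n B z1) = 0" unfolding sprod_def by simp
  then have "m2 * sprod n z1 z2 = 0"
    using sprod_mvmult_commute[OF B, of z1 z2] sprod_mvmult_eq[OF ev2, of z1] by simp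
  then have orth: "sprod n z1 z2 = 0" using m2 by simp
  have "mvmult n H z2 i = m2 * z2 i" if "i < n" for i
    using ev2[OF that] unfolding mvmult_B orth by simp
  with m2 z2 orth show ?thesis by (rule that)
qed

lemma order_ge_2_if_orthonormal_eigenvectors:
  assumes z1: "sprod N z1 z1 = 1" and z2: "sprod N z2 z2 = 1" and orth: "sprod N z1 z2 = 0"
    and ev1: "\<And>i. i < N \<Longrightarrow> mvmult N A z1 i = r * z1 i"
    and ev2: "\<And>i. i < N \<Longrightarrow> mvmult N A z2 i = r * z2 i"
  shows "2 \<le> order (complex_of_real r) (char_poly (cmat K))"
proof -
  define v1 where "v1 = vec N (\<lambda>i. complex_of_real (sqrt (d i) * z1 i))"
  define v2 where "v2 = vec N (\<lambda>i. complex_of_real (sqrt (d i) * z2 i))"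
  obtain i1 where "i1 < N" "z1 i1 \<noteq> 0" using sprod_self_eq_1_nonzero[OF z1] by blast
  with ev1 have e1: "eigenvector (cmat K) v1 (complex_of_real r)"
    unfolding v1_def by (rule eigenvector_K_if_eigenvector_A)
  obtain i2 where "i2 < N" "z2 i2 \<noteq> 0" using sprod_self_eq_1_nonzero[OF z2] by blast
  with ev2 have e2: "eigenvector (cmat K) v2 (complex_of_real r)"
    unfolding v2_def by (rule eigenvector_K_if_eigenvector_A)
  have indep: "c1 = 0 \<and> c2 = 0" if lc: "c1 \<cdot>\<^sub>v v1 + c2 \<cdot>\<^sub>v v2 = 0\<^sub>v N" for c1 c2
  proof -
    have "c1 * complex_of_real (z1 i) + c2 * complex_of_real (z2 i) = 0" if i: "i < N" for i
    proof -
      have "(c1 \<cdot>\<^sub>v v1 + c2 \<cdot>\<^sub>v v2) $ i = 0" using lc i by simp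
      then have "complex_of_real (sqrt (d i))
          * (c1 * complex_of_real (z1 i) + c2 * complex_of_real (z2 i)) = 0"
        using i unfolding v1_def v2_def by (simp add: algebra_simps)
      then show ?thesis using d_pos[OF i] by simp
    qed
    with z1 z2 orth show ?thesis by (rule orthonormal_complex_comb_eq_0)
  qed
  show ?thesis
    by (rule order_char_poly_ge_2[OF _ e1 e2 indep]) (use K_carrier in \<open>simp add: cmat_def\<close>)
qed

lemma nonpos_on_hyperplane_if_simple_top_eigenvalue:
  assumes simple: "order (complex_of_real R) (char_poly (cmat K)) = 1"
    and hyp: "\<forall>\<mu>. eigenvalue (cmat K) \<mu> \<longrightarrow> (\<mu> \<in> \<real> \<and> Re \<mu> \<le> 0) \<or> \<mu> = complex_of_real R"
  shows "nonpos_on_hyperplane N A"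
proof -
  obtain m1 z1 where z1: "sprod N z1 z1 = 1" and bound1: "\<And>x. qform N A x \<le> m1 * sprod N x x"
    and ev1: "\<And>i. i < N \<Longrightarrow> mvmult N A z1 i = m1 * z1 i"
    by (rule symmetric_form_top_eigenpair[OF N_pos A_symmetric]) (rule that)
  have positive_eigenvalue: "r = R"
    if "\<And>i. i < N \<Longrightarrow> mvmult N A z i = r * z i" "sprod N z z = 1" "0 < r" for r z
    using eigenvalue_K_if_eigenvector_A[OF that(1,2)] hyp that(3) by force
  have "qform N A w \<le> 0" if w: "sprod N w z1 = 0" for w
  proof (rule ccontr)
    assume "\<not> qform N A w \<le> 0"
    then have pos: "0 < qform N A w" by simp
    obtain m2 z2 where m2: "0 < m2" and z2: "sprod N z2 z2 = 1" and orth: "sprod N z1 z2 = 0"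
      and ev2: "\<And>i. i < N \<Longrightarrow> mvmult N A z2 i = m2 * z2 i"
      using second_positive_eigenvector[OF N_pos A_symmetric z1 ev1 w pos] by auto
    have "0 < m1 * sprod N w w" using bound1[of w] pos by linarith
    then have "0 < m1" using sprod_self_nonneg[of N w] by (simp add: zero_less_mult_iff)
    with ev1 z1 have "m1 = R" by (rule positive_eigenvalue)
    from ev2 z2 m2 have "m2 = R" by (rule positive_eigenvalue)
    have "mvmult N A z1 i = R * z1 i" "mvmult N A z2 i = R * z2 i" if "i < N" for i
      using ev1[OF that] ev2[OF that] \<open>m1 = R\<close> \<open>m2 = R\<close> by simp_all
    with z1 z2 orth have "2 \<le> order (complex_of_real R) (char_poly (cmat K))"
      by (rule order_ge_2_if_orthonormal_eigenvectors)
    then show False using simple by simp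
  qed
  then show ?thesis unfolding nonpos_on_hyperplane_def by blast
qed

lemma unit_cube_nonneg: "x \<in> unit_cube N \<Longrightarrow> \<forall>i<N. 0 \<le> x i"
  unfolding unit_cube_def by simp

lemma convex_comb_in_unit_cube:
  assumes "x \<in> unit_cube N" "y \<in> unit_cube N" "0 \<le> t" "t \<le> 1"
  shows "(\<lambda>i. (1 - t) * x i + t * y i) \<in> unit_cube N"
  using assms unfolding unit_cube_def by (auto intro!: convex_bound_le add_nonneg_nonneg)

lemma sum_convex_comb:
  fixes t :: real
  shows "(\<Sum>i<N. ((1 - t) * x i + t * y i) * w i) = (1 - t) * (\<Sum>i<N. x i * w i) + t * (\<Sum>i<N. y i * w i)"
  unfolding distrib_right sum.distrib by (simp add: sum_distrib_left mult.assoc)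

lemma convex_Re_fun:
  assumes psd: "pos_semidef_form N A"
  shows "convex_on_coord (unit_cube N) (Re_fun N K)"
  unfolding convex_on_coord_def
proof (intro ballI allI impI)
  fix x y and t :: real
  assume x: "x \<in> unit_cube N" and y: "y \<in> unit_cube N" and t: "0 \<le> t \<and> t \<le> 1"
  define c where "c = (\<lambda>i. (1 - t) * x i + t * y i)"
  have c: "c \<in> unit_cube N" unfolding c_def using x y t by (intro convex_comb_in_unit_cube) auto
  have "Re_fun N K c \<le> (1 - t) * Re_fun N K x + t * Re_fun N K y"
  proof (cases "Re_fun N K c = 0")
    case True
    then show ?thesis
      using t Re_fun_nonneg[of x] Re_fun_nonneg[of y]
      by simp
  next
    case False
    then have pos: "0 < Re_fun N K c" using Re_fun_nonneg[of c] by simp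
    obtain u where u: "(\<Sum>i<N. c i * (u i)^2) = 1"
      and eu: "\<And>i. i < N \<Longrightarrow> mvmult N A (\<lambda>j. c j * u j) i = Re_fun N K c * u i"
      by (rule Re_fun_supporting_vector[OF unit_cube_nonneg[OF c] False]) (rule that)
    let ?l = "\<lambda>\<eta>. Re_fun N K c * (\<Sum>i<N. \<eta> i * (u i)^2)"
    have "Re_fun N K c = ?l c" using u by simp
    also have "\<dots> = (1 - t) * ?l x + t * ?l y"
      unfolding c_def sum_convex_comb by (simp add: algebra_simps)
    also have "\<dots> \<le> (1 - t) * Re_fun N K x + t * Re_fun N K y"
      using t Re_fun_ge_supporting_linear[OF psd unit_cube_nonneg[OF x] pos u eu]
        Re_fun_ge_supporting_linear[OF psd unit_cube_nonneg[OF y] pos u eu]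
      by (intro add_mono mult_left_mono) auto
    finally show ?thesis .
  qed
  then show "Re_fun N K (\<lambda>i. (1 - t) * x i + t * y i) \<le> (1 - t) * Re_fun N K x + t * Re_fun N K y"
    unfolding c_def .
qed

lemma concave_Re_fun:
  assumes hyp: "nonpos_on_hyperplane N A"
  shows "concave_on_coord (unit_cube N) (Re_fun N K)"
  unfolding concave_on_coord_def convex_on_coord_def
proof (intro ballI allI impI)
  fix x y and t :: real
  assume x: "x \<in> unit_cube N" and y: "y \<in> unit_cube N" and t: "0 \<le> t \<and> t \<le> 1"
  define c where "c = (\<lambda>i. (1 - t) * x i + t * y i)"
  have c: "c \<in> unit_cube N" unfolding c_def using x y t by (intro convex_comb_in_unit_cube) auto
  have "(1 - t) * Re_fun N K x + t * Re_fun N K y \<le> Re_fun N K c"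
  proof (cases "Re_fun N K c = 0")
    case True
    have "(1 - t) * Re_fun N K x \<le> Re_fun N K c"
      by (rule Re_fun_scaled_mono)
        (use t unit_cube_nonneg[OF x] unit_cube_nonneg[OF y] in \<open>auto simp: c_def zero_le_mult_iff\<close>)
    moreover have "t * Re_fun N K y \<le> Re_fun N K c"
      by (rule Re_fun_scaled_mono)
        (use t unit_cube_nonneg[OF x] unit_cube_nonneg[OF y] in \<open>auto simp: c_def zero_le_mult_iff\<close>)
    ultimately show ?thesis using True by simp
  next
    case False
    then have pos: "0 < Re_fun N K c" using Re_fun_nonneg[of c] by simp
    obtain u where u: "(\<Sum>i<N. c i * (u i)^2) = 1"
      and eu: "\<And>i. i < N \<Longrightarrow> mvmult N A (\<lambda>j. c j * u j) i = Re_fun N K c * u i"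
      by (rule Re_fun_supporting_vector[OF unit_cube_nonneg[OF c] False]) (rule that)
    let ?l = "\<lambda>\<eta>. Re_fun N K c * (\<Sum>i<N. \<eta> i * (u i)^2)"
    have "(1 - t) * Re_fun N K x + t * Re_fun N K y \<le> (1 - t) * ?l x + t * ?l y"
      using t Re_fun_le_supporting_linear[OF hyp unit_cube_nonneg[OF x] pos u eu]
        Re_fun_le_supporting_linear[OF hyp unit_cube_nonneg[OF y] pos u eu]
      by (intro add_mono mult_left_mono) auto
    also have "\<dots> = ?l c"
      unfolding c_def sum_convex_comb by (simp add: algebra_simps)
    also have "\<dots> = Re_fun N K c" using u by simp
    finally show ?thesis .
  qed
  then show "- Re_fun N K (\<lambda>i. (1 - t) * x i + t * y i)
      \<le> (1 - t) * - Re_fun N K x + t * - Re_fun N K y"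
    unfolding c_def by simp
qed

end

lemma diag_symmetrizable_symmetrization:
  assumes N: "N \<ge> 1" and K: "K \<in> carrier_mat N N" and K_nonneg: "\<forall>i<N. \<forall>j<N. K $$ (i,j) \<ge> 0"
    and "diag_symmetrizable N K"
  obtains d A where "symmetrization N K d A"
proof -
  obtain D S where D: "D \<in> carrier_mat N N" and S: "S \<in> carrier_mat N N" and "diagonal_mat D"
    and D_pos: "\<forall>i<N. D $$ (i,i) > 0" and S_sym: "transpose_mat S = S" and KDS: "K = D * S"
    using assms(4) unfolding diag_symmetrizable_def by blast
  define d where "d = (\<lambda>i. D $$ (i,i))"
  have "D = mat_diag N d"
    using D \<open>diagonal_mat D\<close> unfolding d_def diagonal_mat_def by (intro eq_matI) (auto simp: mat_diag_def)
  then have K_entry: "K $$ (i,j) = d i * S $$ (i,j)" if "i < N" "j < N" for i j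
    using that S unfolding KDS by (simp add: mat_diag_mult_left)
  have d_pos: "0 < d i" if "i < N" for i using D_pos that unfolding d_def by simp
  define A where "A = (\<lambda>i j. sqrt (d i) * S $$ (i,j) * sqrt (d j))"
  have "symmetrization N K d A"
  proof
    show "K $$ (i,j) = sqrt (d i) * A i j / sqrt (d j)" if "i < N" "j < N" for i j
    proof -
      have "sqrt (d i) * sqrt (d i) = d i" "0 < sqrt (d j)" using d_pos[OF that(1)] d_pos[OF that(2)] by auto
      then show ?thesis unfolding K_entry[OF that] A_def by (simp add: field_simps)
    qed
    show "\<forall>i<N. \<forall>j<N. 0 \<le> A i j"
    proof (intro allI impI)
      fix i j assume ij: "i < N" "j < N"
      have "0 \<le> K $$ (i,j)" using K_nonneg ij by simp
      then have "0 \<le> d i * S $$ (i,j)" unfolding K_entry[OF ij] .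
      then have "0 \<le> S $$ (i,j)" using d_pos[OF ij(1)] by (simp add: zero_le_mult_iff)
      then show "0 \<le> A i j" unfolding A_def using d_pos[OF ij(1)] d_pos[OF ij(2)] by simp
    qed
    have "S $$ (i,j) = S $$ (j,i)" if "i < N" "j < N" for i j
      using S_sym S that by (metis carrier_matD index_transpose_mat(1))
    then show "symmetric_form N A" unfolding symmetric_form_def A_def by (simp add: mult_ac)
  qed (use N K d_pos in auto)
  then show ?thesis by (rule that)
qed

theorem theorem4p1:
  fixes N :: nat and K :: "real mat"
  assumes "N \<ge> 1"
    and "K \<in> carrier_mat N N"
    and "\<forall>i<N. \<forall>j<N. K $$ (i,j) \<ge> 0"
    and "diag_symmetrizable N K"
  shows "((\<forall>\<mu>. eigenvalue (cmat K) \<mu> \<longrightarrow> \<mu> \<in> \<real> \<and> Re \<mu> \<ge> 0)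
            \<longrightarrow> convex_on_coord (unit_cube N) (Re_fun N K))
       \<and> ((eigenvalue (cmat K) (complex_of_real (spectral_radius (cmat K)))
            \<and> order (complex_of_real (spectral_radius (cmat K))) (char_poly (cmat K)) = 1
            \<and> (\<forall>\<mu>. eigenvalue (cmat K) \<mu> \<longrightarrow>
                   (\<mu> \<in> \<real> \<and> Re \<mu> \<le> 0) \<or> \<mu> = complex_of_real (spectral_radius (cmat K))))
            \<longrightarrow> concave_on_coord (unit_cube N) (Re_fun N K))"
proof -
  obtain d A where "symmetrization N K d A"
    by (rule diag_symmetrizable_symmetrization[OF assms]) (rule that)
  then interpret symmetrization N K d A .
  show ?thesis
    using convex_Re_fun[OF pos_semidef_if_eigenvalues_nonneg]
      concave_Re_fun[OF nonpos_on_hyperplane_if_simple_top_eigenvalue]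
    by blast
qed

end
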